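(* Let $Y$ be a continuous random variable supported on $[0,\infty)$ whose density $f$ satisfies $f(t)\le Ce^{-\lambda t}$ for all $t\ge0$, for some $C,\lambda>0$. There are constants $\epsilon,\gamma,I>0$, depending only on $C,\lambda$, such that $\mathbb{E}[e^{-sY}]\ne 1$ for every complex $s\ne 0$ with $\Re s\ge -\gamma$, and furthermore $|\mathbb{E}[e^{-sY}]-1| \ge \epsilon\min(|s|,1)$ for every complex $s$ with $|\Re s|\le\gamma$. *)

theory Defs
  imports "HOL-Probability.Probability"
begin

end

theory Submission
  imports Defs
begin

text \<open>
  Write \<open>\<phi>(s) = E exp (-s Y)\<close>. Near \<open>s = 0\<close> a second-order expansion gives
  \<open>\<phi>(s) - 1 = -s E Y + O(|s|\<^sup>2)\<close>, and \<open>E Y \<ge> 1/(4C)\<close> because the density is at most \<open>C\<close>.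
  Away from \<open>0\<close> but in a thin strip around the imaginary axis, \<open>Re (1 - \<phi>(s))\<close> equals
  \<open>E (1 - cos (\<omega>Y))\<close> up to an error \<open>O(|Re s|)\<close>, where \<open>\<omega> = |Im s|\<close> is bounded below.
  Now \<open>1 - cos (\<omega>Y)\<close> is large unless \<open>\<omega>Y\<close> lies within \<open>\<beta>\<close> of \<open>2\<pi>\<int>\<close>; since the weight
  \<open>exp (-\<lambda>t)\<close> only shrinks by a factor from one period to the next, the exponentially weighted
  measure of this periodic set is controlled by its Lebesgue measure over one period, so for
  small \<open>\<beta>\<close> it has probability at most \<open>1/2\<close>. For \<open>Re s > 0\<close> simply
  \<open>|\<phi>(s)| \<le> E exp (-Re s Y) < 1\<close>. All constants depend only on \<open>C\<close> and \<open>\<lambda>\<close>.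
\<close>

lemma nn_integral_exp_neg_Ici:
  fixes c :: real
  assumes "c > 0"
  shows "(\<integral>\<^sup>+t. ennreal (exp (- c * t)) * indicator {0..} t \<partial>lborel) = ennreal (1 / c)"
proof -
  have "(\<integral>\<^sup>+t. ennreal (exp (- c * t)) * indicator {0..} t \<partial>lborel)
      = ennreal (1 / c) * (\<integral>\<^sup>+x. ennreal (exp (- c * (0 + (1 / c) * x))) * indicator {0..} (0 + (1 / c) * x) \<partial>lborel)"
    using assms by (subst nn_integral_real_affine[where c = "1 / c" and t = 0]) auto
  also have "(\<lambda>x. ennreal (exp (- c * (0 + (1 / c) * x))) * indicator {0..} (0 + (1 / c) * x) :: ennreal)
      = (\<lambda>x. ennreal (x ^ 0 * exp (- x)) * indicator {0..} x)"
    using assms by (auto simp: fun_eq_iff zero_le_divide_iff split: split_indicator)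
  finally show ?thesis
    using nn_intergal_power_times_exp_Ici[of 0] by simp
qed

lemma norm_exp_minus_one_minus_le:
  fixes z :: complex
  shows "norm (exp z - 1 - z) \<le> norm z ^ 2 * exp (norm z)"
proof -
  have sn: "summable (\<lambda>k. norm (z ^ (k + 2) /\<^sub>R fact (k + 2)))"
    using summable_norm_exp[of z] by (intro summable_ignore_initial_segment)
  have term_le: "norm (z ^ (k + 2) /\<^sub>R fact (k + 2)) \<le> norm z ^ 2 * (norm z ^ k /\<^sub>R fact k)" for k
  proof -
    have "norm (z ^ (k + 2) /\<^sub>R fact (k + 2)) = norm z ^ (k + 2) / fact (k + 2)"
      by (simp add: norm_power norm_mult divide_inverse mult_ac)
    also have "\<dots> = norm z ^ 2 * (norm z ^ k / fact (k + 2))"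
      by (simp add: power_add power2_eq_square mult_ac)
    also have "\<dots> \<le> norm z ^ 2 * (norm z ^ k / fact k)"
      by (intro mult_left_mono divide_left_mono fact_mono) auto
    finally show ?thesis by (simp add: divide_inverse)
  qed
  have "exp z - 1 - z = (\<Sum>k. z ^ (k + 2) /\<^sub>R fact (k + 2))"
    using exp_first_two_terms[of z] by (simp add: scaleR_conv_of_real divide_inverse mult_ac)
  also have "norm \<dots> \<le> (\<Sum>k. norm (z ^ (k + 2) /\<^sub>R fact (k + 2)))"
    using sn by (rule summable_norm)
  also have "\<dots> \<le> (\<Sum>k. norm z ^ 2 * (norm z ^ k /\<^sub>R fact k))"
    using sn term_le exp_converges[of "norm z"]
    by (intro suminf_le summable_mult) (auto simp: sums_iff)
  also have "\<dots> = norm z ^ 2 * exp (norm z)"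
    using sums_mult[OF exp_converges[of "norm z"], of "norm z ^ 2"] by (simp add: sums_iff)
  finally show ?thesis .
qed

lemma abs_one_minus_exp_le:
  fixes x :: real
  shows "\<bar>1 - exp x\<bar> \<le> \<bar>x\<bar> * exp \<bar>x\<bar>"
proof (cases "x \<ge> 0")
  case True
  have "1 - x \<le> exp (- x)" using exp_ge_add_one_self[of "- x"] by simp
  then have "(1 - x) * exp x \<le> 1" by (simp add: exp_minus field_simps)
  then show ?thesis using True by (simp add: algebra_simps)
next
  case False
  have "1 + x \<le> exp x" "exp x \<le> 1" "1 \<le> exp \<bar>x\<bar>"
    using exp_ge_add_one_self[of x] False by auto
  then show ?thesis using False by (smt (verit) mult_le_cancel_left1)
qed

lemma power_le_exp_scaled:
  fixes t b :: real
  assumes "0 \<le> t" "0 < b"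
  shows "t ^ k \<le> (k / b) ^ k * exp (b * t)"
proof (cases "k = 0")
  case False
  have "b / k * t \<le> exp (b / k * t)" using exp_ge_add_one_self[of "b / k * t"] by linarith
  then have "t \<le> k / b * exp (b / k * t)" using assms False by (simp add: field_simps)
  then have "t ^ k \<le> (k / b * exp (b / k * t)) ^ k" using assms by (intro power_mono) auto
  also have "\<dots> = (k / b) ^ k * exp (b / k * t) ^ k"
    by (rule power_mult_distrib)
  also have "exp (b / k * t) ^ k = exp (b * t)"
    using False exp_of_nat_mult[of k "b / k * t"] by simp
  finally show ?thesis .
qed (use assms in simp)

lemma cos_greater_imp_near_0_or_2pi:
  fixes x \<beta> :: real
  assumes "0 \<le> \<beta>" "\<beta> \<le> pi" "0 \<le> x" "x < 2 * pi" "cos \<beta> < cos x"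
  shows "x \<le> \<beta> \<or> 2 * pi - \<beta> \<le> x"
proof (rule ccontr)
  assume "\<not> (x \<le> \<beta> \<or> 2 * pi - \<beta> \<le> x)"
  then have "\<beta> < x" "x < 2 * pi - \<beta>" by auto
  then have "cos x \<le> cos \<beta>"
    using assms cos_monotone_0_pi_le[of \<beta> x] cos_monotone_0_pi_le[of \<beta> "2 * pi - x"]
    by (cases "x \<le> pi") auto
  then show False using assms by simp
qed

lemma emeasure_cos_greater_period_le:
  fixes \<omega> \<beta> :: real
  assumes "\<omega> > 0" "0 \<le> \<beta>" "\<beta> \<le> pi"
  shows "emeasure lborel ({t. cos \<beta> < cos (\<omega> * t)} \<inter> {0..<2 * pi / \<omega>}) \<le> ennreal (2 * \<beta> / \<omega>)"
proof -
  have "{t. cos \<beta> < cos (\<omega> * t)} \<inter> {0..<2 * pi / \<omega>} \<subseteq> {0..\<beta> / \<omega>} \<union> {(2 * pi - \<beta>) / \<omega>..2 * pi / \<omega>}"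
  proof
    fix t assume t: "t \<in> {t. cos \<beta> < cos (\<omega> * t)} \<inter> {0..<2 * pi / \<omega>}"
    then have "0 \<le> \<omega> * t" "\<omega> * t < 2 * pi"
      using assms by (auto simp: field_simps)
    with t have "\<omega> * t \<le> \<beta> \<or> 2 * pi - \<beta> \<le> \<omega> * t"
      using assms by (intro cos_greater_imp_near_0_or_2pi) auto
    with t assms show "t \<in> {0..\<beta> / \<omega>} \<union> {(2 * pi - \<beta>) / \<omega>..2 * pi / \<omega>}"
      by (auto simp: field_simps)
  qed
  then have "emeasure lborel ({t. cos \<beta> < cos (\<omega> * t)} \<inter> {0..<2 * pi / \<omega>})
      \<le> emeasure lborel {0..\<beta> / \<omega>} + emeasure lborel {(2 * pi - \<beta>) / \<omega>..2 * pi / \<omega>}"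
    by (intro order_trans[OF emeasure_mono emeasure_subadditive]) auto
  also have "\<dots> = ennreal (2 * \<beta> / \<omega>)"
    using assms by (simp add: ennreal_plus[symmetric] field_simps del: ennreal_plus)
  finally show ?thesis .
qed

lemma ennreal_le_of_renewal_eq:
  fixes J J0 :: ennreal and q a :: real
  assumes renewal: "J = J0 + ennreal q * J" and "J < top"
    and q: "0 \<le> q" "q * (1 + a) \<le> 1" and a: "a > 0"
  shows "J \<le> ennreal (1 + 1 / a) * J0"
proof -
  have "J0 < top" using \<open>J < top\<close> renewal by (metis le_iff_add le_less_trans)
  have "enn2real J = enn2real (J0 + ennreal q * J)"
    using renewal by (rule arg_cong)
  also have "\<dots> = enn2real J0 + q * enn2real J"
    using \<open>J < top\<close> \<open>J0 < top\<close> q by (subst enn2real_plus) (auto simp: enn2real_mult ennreal_mult_less_top)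
  finally have J0_eq: "enn2real J0 = enn2real J * (1 - q)" by (simp add: algebra_simps)
  have "a \<le> (1 + a) * (1 - q)"
    using q by (simp add: algebra_simps)
  then have "enn2real J * a \<le> enn2real J * ((1 + a) * (1 - q))"
    by (intro mult_left_mono) auto
  also have "\<dots> = enn2real J0 * (1 + a)"
    by (simp add: J0_eq mult_ac)
  finally have "enn2real J \<le> (1 + 1 / a) * enn2real J0"
    using a by (simp add: field_simps)
  then have "ennreal (enn2real J) \<le> ennreal (1 + 1 / a) * ennreal (enn2real J0)"
    using a by (subst ennreal_mult'[symmetric]) (auto intro: ennreal_leI)
  then show ?thesis using \<open>J < top\<close> \<open>J0 < top\<close> by simp
qed

lemma nn_integral_exp_periodic_set_renewal:
  fixes lam p :: real and S :: "real set"
  assumes p: "p > 0" and [measurable]: "S \<in> sets borel" and periodic: "\<And>t. t + p \<in> S \<longleftrightarrow> t \<in> S"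
  shows "(\<integral>\<^sup>+t. ennreal (exp (- lam * t)) * indicator (S \<inter> {0..}) t \<partial>lborel)
    = (\<integral>\<^sup>+t. ennreal (exp (- lam * t)) * indicator (S \<inter> {0..<p}) t \<partial>lborel)
      + ennreal (exp (- lam * p)) * (\<integral>\<^sup>+t. ennreal (exp (- lam * t)) * indicator (S \<inter> {0..}) t \<partial>lborel)"
proof -
  define F where "F T t = ennreal (exp (- lam * t)) * indicator (S \<inter> T) t" for T t
  have [measurable]: "F T \<in> borel_measurable borel" if [measurable]: "T \<in> sets borel" for T
    unfolding F_def[abs_def] by measurable
  have "F {p..} (p + t) = ennreal (exp (- lam * p)) * F {0..} t" for t
  proof -
    have "ennreal (exp (- lam * (p + t))) = ennreal (exp (- lam * p)) * ennreal (exp (- lam * t))"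
      by (simp add: distrib_left exp_diff exp_minus ennreal_mult' divide_inverse)
    moreover have "p + t \<in> S \<longleftrightarrow> t \<in> S"
      using periodic[of t] by (simp add: add.commute)
    ultimately show ?thesis by (auto simp: F_def mult_ac split: split_indicator)
  qed
  moreover have "(\<integral>\<^sup>+t. F {p..} t \<partial>lborel) = ennreal \<bar>1\<bar> * (\<integral>\<^sup>+t. F {p..} (p + 1 * t) \<partial>lborel)"
    by (rule nn_integral_real_affine) auto
  ultimately have shift: "(\<integral>\<^sup>+t. F {p..} t \<partial>lborel) = ennreal (exp (- lam * p)) * (\<integral>\<^sup>+t. F {0..} t \<partial>lborel)"
    by (simp add: nn_integral_cmult)
  have "(\<integral>\<^sup>+t. F {0..} t \<partial>lborel) = (\<integral>\<^sup>+t. F {0..<p} t + F {p..} t \<partial>lborel)"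
    using p by (intro nn_integral_cong) (auto simp: F_def split: split_indicator)
  also have "\<dots> = (\<integral>\<^sup>+t. F {0..<p} t \<partial>lborel) + ennreal (exp (- lam * p)) * (\<integral>\<^sup>+t. F {0..} t \<partial>lborel)"
    by (simp add: nn_integral_add shift)
  finally show ?thesis unfolding F_def .
qed

lemma nn_integral_exp_periodic_set_le:
  fixes lam p :: real and S :: "real set"
  assumes lam: "lam > 0" and p: "p > 0" and [measurable]: "S \<in> sets borel"
    and periodic: "\<And>t. t + p \<in> S \<longleftrightarrow> t \<in> S"
  shows "(\<integral>\<^sup>+t. ennreal (exp (- lam * t)) * indicator (S \<inter> {0..}) t \<partial>lborel)
    \<le> ennreal (1 + 1 / (lam * p)) * emeasure lborel (S \<inter> {0..<p})"
proof -
  let ?J = "\<integral>\<^sup>+t. ennreal (exp (- lam * t)) * indicator (S \<inter> {0..}) t \<partial>lborel"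
  let ?J_per = "\<integral>\<^sup>+t. ennreal (exp (- lam * t)) * indicator (S \<inter> {0..<p}) t \<partial>lborel"
  have "?J \<le> ennreal (1 + 1 / (lam * p)) * ?J_per"
  proof (rule ennreal_le_of_renewal_eq[OF nn_integral_exp_periodic_set_renewal[OF p _ periodic]])
    have "?J \<le> (\<integral>\<^sup>+t. ennreal (exp (- lam * t)) * indicator {0..} t \<partial>lborel)"
      by (intro nn_integral_mono) (auto split: split_indicator)
    then show "?J < top" using nn_integral_exp_neg_Ici[OF lam] by (simp add: le_less_trans)
    show "exp (- lam * p) * (1 + lam * p) \<le> 1"
      using exp_ge_add_one_self[of "lam * p"] by (simp add: exp_minus field_simps)
  qed (use lam p in auto)
  also have "?J_per \<le> (\<integral>\<^sup>+t. indicator (S \<inter> {0..<p}) t \<partial>lborel)"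
    using lam by (intro nn_integral_mono) (auto split: split_indicator)
  finally show ?thesis by (simp add: mult_left_mono)
qed

lemma nn_integral_exp_cos_greater_le:
  fixes lam \<omega> \<beta> :: real
  assumes lam: "lam > 0" and \<omega>: "\<omega> > 0" and \<beta>: "0 \<le> \<beta>" "\<beta> \<le> pi"
  shows "(\<integral>\<^sup>+t. ennreal (exp (- lam * t)) * indicator ({t. cos \<beta> < cos (\<omega> * t)} \<inter> {0..}) t \<partial>lborel)
    \<le> ennreal (\<beta> * (1 / (pi * lam) + 2 / \<omega>))"
proof -
  let ?S = "{t. cos \<beta> < cos (\<omega> * t)}"
  have periodic: "t + 2 * pi / \<omega> \<in> ?S \<longleftrightarrow> t \<in> ?S" for t
    using \<omega> by (simp add: distrib_left)
  have "(\<integral>\<^sup>+t. ennreal (exp (- lam * t)) * indicator (?S \<inter> {0..}) t \<partial>lborel)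
      \<le> ennreal (1 + 1 / (lam * (2 * pi / \<omega>))) * emeasure lborel (?S \<inter> {0..<2 * pi / \<omega>})"
    using lam \<omega> periodic by (intro nn_integral_exp_periodic_set_le) auto
  also have "\<dots> \<le> ennreal (1 + 1 / (lam * (2 * pi / \<omega>))) * ennreal (2 * \<beta> / \<omega>)"
    using emeasure_cos_greater_period_le[OF \<omega> \<beta>] by (rule mult_left_mono) simp
  also have "\<dots> = ennreal (\<beta> * (1 / (pi * lam) + 2 / \<omega>))"
    using lam \<omega> \<beta> by (subst ennreal_mult'[symmetric]) (auto simp: field_simps)
  finally show ?thesis .
qed

locale exp_dominated_density = prob_space M for M :: "'a measure" +
  fixes Y :: "'a \<Rightarrow> real" and f :: "real \<Rightarrow> real" and C lam :: real
  assumes distributed: "distributed M lborel Y (\<lambda>t. ennreal (f t))"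
    and density_nonneg: "\<And>t. 0 \<le> f t"
    and AE_nonneg: "AE x in M. 0 \<le> Y x"
    and density_le: "\<And>t. t \<ge> 0 \<Longrightarrow> f t \<le> C * exp (- lam * t)"
    and C_pos: "C > 0" and lam_pos: "lam > 0"
begin

abbreviation laplace :: "complex \<Rightarrow> complex" where
  "laplace s \<equiv> expectation (\<lambda>x. exp (- s * complex_of_real (Y x)))"

lemma measurable_Y [measurable]: "Y \<in> borel_measurable M"
  using distributed_measurable[OF distributed] by simp

lemma nn_integral_comp_le:
  assumes [measurable]: "h \<in> borel_measurable borel"
  shows "(\<integral>\<^sup>+x. h (Y x) \<partial>M) \<le> (\<integral>\<^sup>+t. ennreal (C * exp (- lam * t)) * indicator {0..} t * h t \<partial>lborel)"
proof -
  have distr_eq: "distr M lborel Y = density lborel (\<lambda>t. ennreal (f t))"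
    using distributed by (simp add: distributed_def)
  have "AE t in distr M lborel Y. 0 \<le> t"
    using AE_nonneg by (subst AE_distr_iff) auto
  then have support: "AE t in lborel. 0 < ennreal (f t) \<longrightarrow> 0 \<le> t"
    unfolding distr_eq by (subst (asm) AE_density) (use distributed in \<open>auto simp: distributed_def\<close>)
  have "(\<integral>\<^sup>+x. h (Y x) \<partial>M) = (\<integral>\<^sup>+t. h t \<partial>distr M lborel Y)"
    by (simp add: nn_integral_distr)
  also have "\<dots> = (\<integral>\<^sup>+t. ennreal (f t) * h t \<partial>lborel)"
    using distributed by (simp add: distr_eq nn_integral_density distributed_def)
  also have "\<dots> \<le> (\<integral>\<^sup>+t. ennreal (C * exp (- lam * t)) * indicator {0..} t * h t \<partial>lborel)"
    using support
  proof (intro nn_integral_mono_AE, eventually_elim)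
    case (elim t)
    show ?case
    proof (cases "0 \<le> t")
      case True
      then show ?thesis using density_le[OF True] by (auto intro!: mult_right_mono ennreal_leI)
    next
      case False
      then have "f t = 0" using elim density_nonneg[of t] by (cases "f t > 0") auto
      then show ?thesis by simp
    qed
  qed
  finally show ?thesis .
qed

lemma expectation_comp_le:
  fixes G :: "real \<Rightarrow> real"
  assumes [measurable]: "G \<in> borel_measurable borel" and "0 \<le> K" and G_nonneg: "\<And>t. 0 \<le> G t"
    and bound: "(\<integral>\<^sup>+t. ennreal (C * exp (- lam * t)) * indicator {0..} t * ennreal (G t) \<partial>lborel) \<le> ennreal K"
  shows "integrable M (\<lambda>x. G (Y x))" "expectation (\<lambda>x. G (Y x)) \<le> K"
proof -
  have nn: "(\<integral>\<^sup>+x. ennreal (G (Y x)) \<partial>M) \<le> ennreal K"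
    using nn_integral_comp_le[of "\<lambda>t. ennreal (G t)"] bound by auto
  show "integrable M (\<lambda>x. G (Y x))"
    using le_less_trans[OF nn ennreal_less_top] G_nonneg by (intro integrableI_nonneg) auto
  have "expectation (\<lambda>x. G (Y x)) = enn2real (\<integral>\<^sup>+x. ennreal (G (Y x)) \<partial>M)"
    using G_nonneg by (intro integral_eq_nn_integral) auto
  also have "\<dots> \<le> K"
    using enn2real_mono[OF nn ennreal_less_top] \<open>0 \<le> K\<close> by simp
  finally show "expectation (\<lambda>x. G (Y x)) \<le> K" .
qed

lemma expectation_comp_le_of_growth:
  fixes G :: "real \<Rightarrow> real"
  assumes [measurable]: "G \<in> borel_measurable borel" and "0 \<le> B" and G_nonneg: "\<And>t. 0 \<le> G t"
    and growth: "\<And>t. 0 \<le> t \<Longrightarrow> G t \<le> B * exp (lam / 2 * t)"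
  shows "integrable M (\<lambda>x. G (Y x))" "expectation (\<lambda>x. G (Y x)) \<le> 2 * B * C / lam"
proof -
  have "(\<integral>\<^sup>+t. ennreal (C * exp (- lam * t)) * indicator {0..} t * ennreal (G t) \<partial>lborel)
     \<le> (\<integral>\<^sup>+t. ennreal (C * B) * (ennreal (exp (- (lam / 2) * t)) * indicator {0..} t) \<partial>lborel)"
  proof (intro nn_integral_mono)
    fix t
    show "ennreal (C * exp (- lam * t)) * indicator {0..} t * ennreal (G t)
      \<le> ennreal (C * B) * (ennreal (exp (- (lam / 2) * t)) * indicator {0..} t)"
    proof (cases "0 \<le> t")
      case True
      have "C * exp (- lam * t) * G t \<le> C * exp (- lam * t) * (B * exp (lam / 2 * t))"
        using growth[OF True] C_pos by (intro mult_left_mono) auto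
      also have "\<dots> = C * B * exp (- (lam / 2) * t)"
        by (simp add: mult_ac flip: exp_add)
      finally show ?thesis
        using True C_pos G_nonneg[of t] \<open>0 \<le> B\<close>
        by (simp add: ennreal_mult'[symmetric] ennreal_mult''[symmetric] ennreal_leI)
    qed simp
  qed
  also have "\<dots> = ennreal (2 * B * C / lam)"
    using nn_integral_exp_neg_Ici[of "lam / 2"] lam_pos C_pos \<open>0 \<le> B\<close>
    by (simp add: nn_integral_cmult ennreal_mult''[symmetric] field_simps)
  moreover have "0 \<le> 2 * B * C / lam"
    using C_pos \<open>0 \<le> B\<close> lam_pos by simp
  ultimately show "integrable M (\<lambda>x. G (Y x))" "expectation (\<lambda>x. G (Y x)) \<le> 2 * B * C / lam"
    using expectation_comp_le[OF assms(1) _ G_nonneg] by auto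
qed

lemma expectation_indicator_le:
  assumes [measurable]: "S \<in> sets borel" and "0 \<le> K"
    and bound: "(\<integral>\<^sup>+t. ennreal (exp (- lam * t)) * indicator (S \<inter> {0..}) t \<partial>lborel) \<le> ennreal K"
  shows "integrable M (\<lambda>x. indicator S (Y x) :: real)"
    and "expectation (\<lambda>x. indicator S (Y x) :: real) \<le> C * K"
proof -
  have "(\<integral>\<^sup>+t. ennreal (C * exp (- lam * t)) * indicator {0..} t * ennreal (indicator S t) \<partial>lborel)
      = (\<integral>\<^sup>+t. ennreal C * (ennreal (exp (- lam * t)) * indicator (S \<inter> {0..}) t) \<partial>lborel)"
    using C_pos by (intro nn_integral_cong) (auto simp: ennreal_mult split: split_indicator)
  also have "\<dots> = ennreal C * (\<integral>\<^sup>+t. ennreal (exp (- lam * t)) * indicator (S \<inter> {0..}) t \<partial>lborel)"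
    by (rule nn_integral_cmult) simp
  also have "\<dots> \<le> ennreal C * ennreal K"
    using bound by (rule mult_left_mono) simp
  also have "\<dots> = ennreal (C * K)"
    using C_pos by (simp add: ennreal_mult'[symmetric])
  finally show "integrable M (\<lambda>x. indicator S (Y x) :: real)"
    and "expectation (\<lambda>x. indicator S (Y x) :: real) \<le> C * K"
    using expectation_comp_le[of "indicator S" "C * K"] C_pos \<open>0 \<le> K\<close> by auto
qed

lemma expectation_indicator_lessThan_le:
  assumes "0 \<le> a"
  shows "integrable M (\<lambda>x. indicator {..<a} (Y x) :: real)"
    and "expectation (\<lambda>x. indicator {..<a} (Y x) :: real) \<le> C * a"
proof -
  have "(\<integral>\<^sup>+t. ennreal (exp (- lam * t)) * indicator ({..<a} \<inter> {0..}) t \<partial>lborel)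
      \<le> (\<integral>\<^sup>+t. indicator {0..a} t \<partial>lborel)"
    using lam_pos by (intro nn_integral_mono) (auto split: split_indicator)
  also have "\<dots> = ennreal a" using assms by simp
  finally show "integrable M (\<lambda>x. indicator {..<a} (Y x) :: real)"
    and "expectation (\<lambda>x. indicator {..<a} (Y x) :: real) \<le> C * a"
    using expectation_indicator_le[of "{..<a}" a] assms by auto
qed

lemma expectation_power_exp_le:
  shows "integrable M (\<lambda>x. \<bar>Y x\<bar> ^ k * exp (lam / 4 * \<bar>Y x\<bar>))"
    and "expectation (\<lambda>x. \<bar>Y x\<bar> ^ k * exp (lam / 4 * \<bar>Y x\<bar>)) \<le> 2 * (4 * real k / lam) ^ k * C / lam"
proof -
  have growth: "\<bar>t\<bar> ^ k * exp (lam / 4 * \<bar>t\<bar>) \<le> (4 * real k / lam) ^ k * exp (lam / 2 * t)"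
    if "0 \<le> t" for t
  proof -
    have "t ^ k * exp (lam / 4 * t) \<le> (4 * real k / lam) ^ k * exp (lam / 4 * t) * exp (lam / 4 * t)"
      using power_le_exp_scaled[OF that, of "lam / 4" k] lam_pos
      by (intro mult_right_mono) (auto simp: ac_simps)
    also have "\<dots> = (4 * real k / lam) ^ k * exp (lam / 2 * t)"
      by (simp add: mult.assoc flip: exp_add)
    finally show ?thesis using that by simp
  qed
  have "0 \<le> (4 * real k / lam) ^ k" using lam_pos by simp
  from expectation_comp_le_of_growth[OF _ this _ growth]
  show "integrable M (\<lambda>x. \<bar>Y x\<bar> ^ k * exp (lam / 4 * \<bar>Y x\<bar>))"
    and "expectation (\<lambda>x. \<bar>Y x\<bar> ^ k * exp (lam / 4 * \<bar>Y x\<bar>)) \<le> 2 * (4 * real k / lam) ^ k * C / lam"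
    by simp_all
qed

lemma integrable_laplace:
  assumes "Re s \<ge> - lam / 4"
  shows "integrable M (\<lambda>x. exp (- s * complex_of_real (Y x)))"
  using expectation_power_exp_le(1)[of 0]
proof (rule Bochner_Integration.integrable_bound)
  show "AE x in M. norm (exp (- s * complex_of_real (Y x))) \<le> norm (\<bar>Y x\<bar> ^ 0 * exp (lam / 4 * \<bar>Y x\<bar>))"
    using AE_nonneg
  proof eventually_elim
    case (elim x)
    have "- Re s * Y x \<le> lam / 4 * Y x" using assms elim by (intro mult_right_mono) auto
    then show ?case using elim by (simp add: norm_exp_eq_Re)
  qed
qed simp

lemma integrable_Y: "integrable M Y"
  using expectation_power_exp_le(1)[of 1]
proof (rule Bochner_Integration.integrable_bound)
  show "AE x in M. norm (Y x) \<le> norm (\<bar>Y x\<bar> ^ 1 * exp (lam / 4 * \<bar>Y x\<bar>))"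
    using lam_pos by (intro AE_I2) (simp add: abs_mult mult_le_cancel_left1)
qed simp

text \<open>The density is at most \<open>C\<close>, so \<open>Y\<close> puts mass at most \<open>1/2\<close> below \<open>a = 1/(2C)\<close>.\<close>

lemma expectation_Y_ge: "1 / (4 * C) \<le> expectation Y"
proof -
  define a where "a = 1 / (2 * C)"
  have a: "0 < a" using C_pos by (simp add: a_def)
  note small = expectation_indicator_lessThan_le[OF less_imp_le[OF a]]
  have "a - a * expectation (\<lambda>x. indicator {..<a} (Y x)) = expectation (\<lambda>x. a - a * indicator {..<a} (Y x))"
    using small by (simp add: prob_space)
  also have "\<dots> \<le> expectation Y"
  proof (rule integral_mono_AE)
    show "AE x in M. a - a * indicator {..<a} (Y x) \<le> Y x"
      using AE_nonneg by eventually_elim (auto split: split_indicator)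
  qed (use small integrable_Y in auto)
  finally have "a - a * expectation (\<lambda>x. indicator {..<a} (Y x)) \<le> expectation Y" .
  moreover have "a * expectation (\<lambda>x. indicator {..<a} (Y x)) \<le> a * (C * a)"
    using small a by (intro mult_left_mono) auto
  moreover have "a - a * (C * a) = 1 / (4 * C)" using C_pos by (simp add: a_def field_simps)
  ultimately show ?thesis by linarith
qed

lemma expectation_exp_neg_less_one:
  assumes "\<sigma> > 0"
  shows "expectation (\<lambda>x. exp (- \<sigma> * Y x)) < 1"
proof -
  define a where "a = 1 / (2 * C)"
  have a: "0 < a" using C_pos by (simp add: a_def)
  note small = expectation_indicator_lessThan_le[OF less_imp_le[OF a]]
  define e where "e = exp (- \<sigma> * a)"
  have e: "e < 1" using assms a by (simp add: e_def)
  have "integrable M (\<lambda>x. exp (- \<sigma> * Y x))"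
  proof (rule Bochner_Integration.integrable_bound)
    show "AE x in M. norm (exp (- \<sigma> * Y x)) \<le> norm (1::real)"
      using AE_nonneg by eventually_elim (use assms in simp)
  qed simp_all
  then have "expectation (\<lambda>x. exp (- \<sigma> * Y x)) \<le> expectation (\<lambda>x. 1 - (1 - e) * (1 - indicator {..<a} (Y x)))"
  proof (rule integral_mono_AE)
    show "AE x in M. exp (- \<sigma> * Y x) \<le> 1 - (1 - e) * (1 - indicator {..<a} (Y x))"
      using AE_nonneg
    proof eventually_elim
      case (elim x)
      have "Y x < a \<or> exp (- \<sigma> * Y x) \<le> e"
        using assms by (auto simp: e_def)
      then show ?case using elim assms by (auto split: split_indicator)
    qed
  qed (use small in auto)
  also have "\<dots> = 1 - (1 - e) * (1 - expectation (\<lambda>x. indicator {..<a} (Y x)))"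
    using small by (simp add: prob_space)
  also have "\<dots> \<le> 1 - (1 - e) * (1 - C * a)"
    using small e by (intro diff_left_mono mult_left_mono) auto
  also have "\<dots> < 1" using e C_pos by (simp add: a_def)
  finally show ?thesis .
qed

lemma laplace_taylor_le:
  assumes s: "cmod s \<le> lam / 4"
  shows "cmod (laplace s - 1 + s * expectation Y) \<le> (cmod s)\<^sup>2 * (128 * C / lam ^ 3)"
proof -
  have "Re s \<ge> - lam / 4" using abs_Re_le_cmod[of s] s by linarith
  note int_exp = integrable_laplace[OF this]
  note moment = expectation_power_exp_le[of 2]
  have "laplace s - 1 + s * expectation Y
      = expectation (\<lambda>x. exp (- s * Y x) - 1 - (- s * Y x))"
    using int_exp integrable_Y by (simp add: prob_space)
  also have "cmod \<dots> \<le> expectation (\<lambda>x. cmod (exp (- s * Y x) - 1 - (- s * Y x)))"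
    by (rule integral_norm_bound)
  also have "\<dots> \<le> expectation (\<lambda>x. (cmod s)\<^sup>2 * (\<bar>Y x\<bar> ^ 2 * exp (lam / 4 * \<bar>Y x\<bar>)))"
  proof (rule integral_mono)
    fix x
    have "cmod (exp (- s * Y x) - 1 - (- s * Y x)) \<le> cmod (- s * Y x) ^ 2 * exp (cmod (- s * Y x))"
      by (rule norm_exp_minus_one_minus_le)
    also have "\<dots> \<le> cmod (- s * Y x) ^ 2 * exp (lam / 4 * \<bar>Y x\<bar>)"
      using mult_right_mono[OF s abs_ge_zero[of "Y x"]] by (intro mult_left_mono) (auto simp: norm_mult)
    also have "\<dots> = (cmod s)\<^sup>2 * (\<bar>Y x\<bar> ^ 2 * exp (lam / 4 * \<bar>Y x\<bar>))"
      by (simp add: norm_mult power_mult_distrib)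
    finally show "cmod (exp (- s * Y x) - 1 - (- s * Y x)) \<le> (cmod s)\<^sup>2 * (\<bar>Y x\<bar> ^ 2 * exp (lam / 4 * \<bar>Y x\<bar>))" .
  qed (use int_exp integrable_Y moment in auto)
  also have "\<dots> = (cmod s)\<^sup>2 * expectation (\<lambda>x. \<bar>Y x\<bar> ^ 2 * exp (lam / 4 * \<bar>Y x\<bar>))"
    by simp
  also have "\<dots> \<le> (cmod s)\<^sup>2 * (2 * (4 * real 2 / lam) ^ 2 * C / lam)"
    using moment(2) by (rule mult_left_mono) simp
  also have "2 * (4 * real 2 / lam) ^ 2 * C / lam = 128 * C / lam ^ 3"
    by (simp add: power2_eq_square power3_eq_cube)
  finally show ?thesis .
qed

lemma expectation_abs_one_minus_exp_le:
  assumes \<sigma>: "\<bar>\<sigma>\<bar> \<le> lam / 4"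
  shows "integrable M (\<lambda>x. \<bar>1 - exp (- \<sigma> * Y x)\<bar>)"
    and "expectation (\<lambda>x. \<bar>1 - exp (- \<sigma> * Y x)\<bar>) \<le> \<bar>\<sigma>\<bar> * (8 * C / lam\<^sup>2)"
proof -
  note moment = expectation_power_exp_le[of 1]
  have pointwise: "\<bar>1 - exp (- \<sigma> * t)\<bar> \<le> \<bar>\<sigma>\<bar> * (\<bar>t\<bar> ^ 1 * exp (lam / 4 * \<bar>t\<bar>))" for t
  proof -
    have "\<bar>1 - exp (- \<sigma> * t)\<bar> \<le> \<bar>\<sigma>\<bar> * \<bar>t\<bar> * exp \<bar>- \<sigma> * t\<bar>"
      using abs_one_minus_exp_le[of "- \<sigma> * t"] by (simp add: abs_mult)
    also have "\<dots> \<le> \<bar>\<sigma>\<bar> * \<bar>t\<bar> * exp (lam / 4 * \<bar>t\<bar>)"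
      using mult_right_mono[OF \<sigma> abs_ge_zero[of t]] by (intro mult_left_mono) (auto simp: abs_mult)
    finally show ?thesis by (simp add: mult.assoc)
  qed
  have int_bound: "integrable M (\<lambda>x. \<bar>\<sigma>\<bar> * (\<bar>Y x\<bar> ^ 1 * exp (lam / 4 * \<bar>Y x\<bar>)))"
    using moment(1) by (rule integrable_mult_right)
  then show int: "integrable M (\<lambda>x. \<bar>1 - exp (- \<sigma> * Y x)\<bar>)"
  proof (rule Bochner_Integration.integrable_bound)
    show "AE x in M. norm \<bar>1 - exp (- \<sigma> * Y x)\<bar> \<le> norm (\<bar>\<sigma>\<bar> * (\<bar>Y x\<bar> ^ 1 * exp (lam / 4 * \<bar>Y x\<bar>)))"
      using pointwise by (intro AE_I2) (simp add: abs_mult)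
  qed simp
  have "expectation (\<lambda>x. \<bar>1 - exp (- \<sigma> * Y x)\<bar>) \<le> expectation (\<lambda>x. \<bar>\<sigma>\<bar> * (\<bar>Y x\<bar> ^ 1 * exp (lam / 4 * \<bar>Y x\<bar>)))"
    using int int_bound pointwise by (rule integral_mono)
  also have "\<dots> = \<bar>\<sigma>\<bar> * expectation (\<lambda>x. \<bar>Y x\<bar> ^ 1 * exp (lam / 4 * \<bar>Y x\<bar>))"
    by (rule integral_mult_right_zero)
  also have "\<dots> \<le> \<bar>\<sigma>\<bar> * (2 * (4 * real 1 / lam) ^ 1 * C / lam)"
    using moment(2) by (rule mult_left_mono) simp
  also have "2 * (4 * real 1 / lam) ^ 1 * C / lam = 8 * C / lam\<^sup>2"
    by (simp add: power2_eq_square)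
  finally show "expectation (\<lambda>x. \<bar>1 - exp (- \<sigma> * Y x)\<bar>) \<le> \<bar>\<sigma>\<bar> * (8 * C / lam\<^sup>2)" .
qed

lemma expectation_one_minus_cos_ge:
  assumes \<omega>: "\<omega> > 0" and \<beta>: "0 \<le> \<beta>" "\<beta> \<le> pi"
  shows "integrable M (\<lambda>x. 1 - cos (\<omega> * Y x))"
    and "(1 - cos \<beta>) * (1 - C * \<beta> * (1 / (pi * lam) + 2 / \<omega>)) \<le> expectation (\<lambda>x. 1 - cos (\<omega> * Y x))"
proof -
  define B where "B = {t. cos \<beta> < cos (\<omega> * t)}"
  have int_cos: "integrable M (\<lambda>x. 1 - cos (\<omega> * Y x))"
  proof (rule Bochner_Integration.integrable_bound)
    show "AE x in M. norm (1 - cos (\<omega> * Y x)) \<le> norm (2::real)"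
      by (intro AE_I2) (auto simp: abs_le_iff)
  qed simp_all
  define K where "K = \<beta> * (1 / (pi * lam) + 2 / \<omega>)"
  have [measurable]: "B \<in> sets borel" unfolding B_def by measurable
  have "0 \<le> K" using \<beta> \<omega> lam_pos by (simp add: K_def)
  from expectation_indicator_le[OF _ this] nn_integral_exp_cos_greater_le[OF lam_pos \<omega> \<beta>]
  have "expectation (\<lambda>x. indicator B (Y x) :: real) \<le> C * K"
    and int_B: "integrable M (\<lambda>x. indicator B (Y x) :: real)"
    by (auto simp: B_def K_def)
  then have "(1 - cos \<beta>) * (1 - C * K) \<le> (1 - cos \<beta>) * (1 - expectation (\<lambda>x. indicator B (Y x)))"
    by (intro mult_left_mono) auto
  also have "\<dots> = expectation (\<lambda>x. (1 - cos \<beta>) * (1 - indicator B (Y x)))"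
    using int_B by (simp add: prob_space)
  also have "\<dots> \<le> expectation (\<lambda>x. 1 - cos (\<omega> * Y x))"
  proof (rule integral_mono)
    show "(1 - cos \<beta>) * (1 - indicator B (Y x)) \<le> 1 - cos (\<omega> * Y x)" for x
      by (cases "Y x \<in> B") (auto simp: B_def)
  qed (use int_B int_cos in auto)
  finally show "(1 - cos \<beta>) * (1 - C * \<beta> * (1 / (pi * lam) + 2 / \<omega>)) \<le> expectation (\<lambda>x. 1 - cos (\<omega> * Y x))"
    by (simp add: K_def mult.assoc)
  show "integrable M (\<lambda>x. 1 - cos (\<omega> * Y x))" by (fact int_cos)
qed

lemma norm_laplace_sub_one_ge_near_zero:
  assumes "cmod s \<le> lam / 4"
  shows "cmod s / (4 * C) - (cmod s)\<^sup>2 * (128 * C / lam ^ 3) \<le> cmod (laplace s - 1)"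
proof -
  have "cmod s / (4 * C) \<le> cmod s * expectation Y"
    using mult_left_mono[OF expectation_Y_ge norm_ge_zero[of s]] by simp
  also have "\<dots> = cmod (s * expectation Y)"
  proof -
    have "0 < expectation Y"
      by (rule less_le_trans[OF _ expectation_Y_ge]) (use C_pos in simp)
    then show ?thesis by (simp add: norm_mult)
  qed
  also have "\<dots> \<le> cmod (laplace s - 1 + s * expectation Y) + cmod (laplace s - 1)"
    using norm_triangle_ineq4[of "laplace s - 1 + s * expectation Y" "laplace s - 1"] by simp
  finally show ?thesis using laplace_taylor_le[OF assms] by linarith
qed

lemma norm_laplace_sub_one_ge_oscillating:
  assumes "Im s \<noteq> 0" and \<beta>: "0 \<le> \<beta>" "\<beta> \<le> pi" and Re_s: "\<bar>Re s\<bar> \<le> lam / 4"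
  shows "(1 - cos \<beta>) * (1 - C * \<beta> * (1 / (pi * lam) + 2 / \<bar>Im s\<bar>)) - \<bar>Re s\<bar> * (8 * C / lam\<^sup>2)
    \<le> cmod (laplace s - 1)"
proof -
  define \<sigma> where "\<sigma> = Re s"
  define \<omega> where "\<omega> = \<bar>Im s\<bar>"
  have "\<omega> > 0" using assms by (simp add: \<omega>_def)
  note cosine = expectation_one_minus_cos_ge[OF this \<beta>]
  note damping = expectation_abs_one_minus_exp_le[of \<sigma>]
  have int_exp: "integrable M (\<lambda>x. exp (- s * Y x))"
    using Re_s by (intro integrable_laplace) auto
  have Re_exp: "Re (exp (- s * y)) = exp (- \<sigma> * y) * cos (\<omega> * y)" for y
    by (cases "Im s \<ge> 0") (auto simp: Re_exp \<sigma>_def \<omega>_def)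
  have "(1 - cos \<beta>) * (1 - C * \<beta> * (1 / (pi * lam) + 2 / \<omega>)) - \<bar>\<sigma>\<bar> * (8 * C / lam\<^sup>2)
      \<le> expectation (\<lambda>x. 1 - cos (\<omega> * Y x)) - expectation (\<lambda>x. \<bar>1 - exp (- \<sigma> * Y x)\<bar>)"
    using cosine damping Re_s by (simp add: \<sigma>_def)
  also have "\<dots> = expectation (\<lambda>x. (1 - cos (\<omega> * Y x)) - \<bar>1 - exp (- \<sigma> * Y x)\<bar>)"
    using cosine damping Re_s by (simp add: \<sigma>_def)
  also have "\<dots> \<le> expectation (\<lambda>x. 1 - Re (exp (- s * Y x)))"
  proof (rule integral_mono)
    fix x
    \<comment> \<open>\<open>Re (1 - e^{-sy}) = (1 - cos \<omega>y) + (1 - e^{-\<sigma>y}) cos \<omega>y\<close>\<close>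
    have "\<bar>(1 - exp (- \<sigma> * Y x)) * cos (\<omega> * Y x)\<bar> \<le> \<bar>1 - exp (- \<sigma> * Y x)\<bar>"
      by (simp add: abs_mult mult_left_le)
    then show "(1 - cos (\<omega> * Y x)) - \<bar>1 - exp (- \<sigma> * Y x)\<bar> \<le> 1 - Re (exp (- s * Y x))"
      unfolding Re_exp by (auto simp: abs_le_iff algebra_simps)
  qed (use cosine damping Re_s int_exp in \<open>auto simp: \<sigma>_def\<close>)
  also have "\<dots> = Re (1 - laplace s)"
    using int_exp by (simp add: prob_space)
  also have "\<dots> \<le> cmod (laplace s - 1)"
    by (metis abs_Re_le_cmod abs_le_D1 norm_minus_commute)
  finally show ?thesis by (simp add: \<sigma>_def \<omega>_def)
qed

lemma norm_laplace_less_one: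
  assumes "Re s > 0"
  shows "cmod (laplace s) < 1"
proof -
  have "cmod (laplace s) \<le> expectation (\<lambda>x. cmod (exp (- s * Y x)))"
    by (rule integral_norm_bound)
  also have "\<dots> = expectation (\<lambda>x. exp (- Re s * Y x))"
    by (simp add: norm_exp_eq_Re)
  also have "\<dots> < 1"
    using expectation_exp_neg_less_one[OF assms] .
  finally show ?thesis .
qed

end

text \<open>
  \<open>gap_radius\<close> delimits the Taylor regime; beyond it \<open>|Im s| \<ge> gap_radius / 2\<close> on the strip,
  which is what \<open>gap_angle\<close> is tuned to.
\<close>

definition gap_radius :: "real \<Rightarrow> real \<Rightarrow> real" where
  "gap_radius C lam = min (lam / 4) (lam ^ 3 / (1024 * C\<^sup>2))"

definition gap_angle :: "real \<Rightarrow> real \<Rightarrow> real" where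
  "gap_angle C lam = min pi (1 / (2 * C * (1 / (pi * lam) + 4 / gap_radius C lam)))"

definition gap_strip :: "real \<Rightarrow> real \<Rightarrow> real" where
  "gap_strip C lam = min (gap_radius C lam / 2) ((1 - cos (gap_angle C lam)) * lam\<^sup>2 / (32 * C))"

definition gap_epsilon :: "real \<Rightarrow> real \<Rightarrow> real" where
  "gap_epsilon C lam = min (1 / (8 * C)) ((1 - cos (gap_angle C lam)) / 4)"

context
  fixes C lam :: real
  assumes C: "C > 0" and lam: "lam > 0"
begin

lemma gap_radius_bounds:
  shows "0 < gap_radius C lam" "gap_radius C lam \<le> lam / 4"
    and "gap_radius C lam * (128 * C / lam ^ 3) \<le> 1 / (8 * C)"
proof -
  show "0 < gap_radius C lam" "gap_radius C lam \<le> lam / 4"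
    using C lam by (auto simp: gap_radius_def)
  have "gap_radius C lam * (128 * C / lam ^ 3) \<le> lam ^ 3 / (1024 * C\<^sup>2) * (128 * C / lam ^ 3)"
    using C lam by (intro mult_right_mono) (auto simp: gap_radius_def)
  also have "\<dots> = 1 / (8 * C)"
    using C lam by (simp add: field_simps power2_eq_square)
  finally show "gap_radius C lam * (128 * C / lam ^ 3) \<le> 1 / (8 * C)" .
qed

lemma gap_angle_bounds:
  shows "0 < gap_angle C lam" "gap_angle C lam \<le> pi" "cos (gap_angle C lam) < 1"
    and "C * gap_angle C lam * (1 / (pi * lam) + 4 / gap_radius C lam) \<le> 1 / 2"
proof -
  define S where "S = 1 / (pi * lam) + 4 / gap_radius C lam"
  have S: "S > 0" using gap_radius_bounds(1) lam by (simp add: S_def add_pos_pos)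
  show pos: "0 < gap_angle C lam" and le: "gap_angle C lam \<le> pi"
    using C S by (auto simp: gap_angle_def S_def[symmetric])
  show "cos (gap_angle C lam) < 1"
    using cos_monotone_0_pi[OF _ pos le] by simp
  have "C * gap_angle C lam * S \<le> C * (1 / (2 * C * S)) * S"
    using C S by (intro mult_right_mono mult_left_mono) (auto simp: gap_angle_def S_def[symmetric])
  then show "C * gap_angle C lam * (1 / (pi * lam) + 4 / gap_radius C lam) \<le> 1 / 2"
    using C S by (simp add: S_def[symmetric])
qed

lemma gap_strip_bounds:
  shows "0 < gap_strip C lam" "gap_strip C lam \<le> gap_radius C lam / 2"
    and "gap_strip C lam * (8 * C / lam\<^sup>2) \<le> (1 - cos (gap_angle C lam)) / 4"
proof -
  show "0 < gap_strip C lam" "gap_strip C lam \<le> gap_radius C lam / 2"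
    using gap_radius_bounds(1) gap_angle_bounds(3) C lam by (auto simp: gap_strip_def)
  have "gap_strip C lam * (8 * C / lam\<^sup>2) \<le> (1 - cos (gap_angle C lam)) * lam\<^sup>2 / (32 * C) * (8 * C / lam\<^sup>2)"
    using C lam by (intro mult_right_mono) (auto simp: gap_strip_def)
  also have "\<dots> = (1 - cos (gap_angle C lam)) / 4"
    using C lam by (simp add: field_simps)
  finally show "gap_strip C lam * (8 * C / lam\<^sup>2) \<le> (1 - cos (gap_angle C lam)) / 4" .
qed

lemma gap_epsilon_bounds:
  shows "0 < gap_epsilon C lam" "gap_epsilon C lam \<le> 1 / (8 * C)"
    and "gap_epsilon C lam \<le> (1 - cos (gap_angle C lam)) / 4"
proof -
  show "0 < gap_epsilon C lam" using gap_angle_bounds(3) C by (simp add: gap_epsilon_def)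
  show "gap_epsilon C lam \<le> 1 / (8 * C)" unfolding gap_epsilon_def by (rule min.cobounded1)
  show "gap_epsilon C lam \<le> (1 - cos (gap_angle C lam)) / 4" unfolding gap_epsilon_def by (rule min.cobounded2)
qed

end

context exp_dominated_density
begin

lemma norm_laplace_sub_one_ge_small:
  assumes s: "cmod s \<le> gap_radius C lam"
  shows "cmod s / (8 * C) \<le> cmod (laplace s - 1)"
proof -
  note \<delta> = gap_radius_bounds[OF C_pos lam_pos]
  have "0 \<le> 128 * C / lam ^ 3" using C_pos lam_pos by simp
  from mult_left_mono[OF mult_right_mono[OF s this] norm_ge_zero[of s]]
  have "(cmod s)\<^sup>2 * (128 * C / lam ^ 3) \<le> cmod s * (gap_radius C lam * (128 * C / lam ^ 3))"
    by (simp only: power2_eq_square mult.assoc)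
  also have "\<dots> \<le> cmod s / (8 * C)"
    using mult_left_mono[OF \<delta>(3) norm_ge_zero[of s]] by simp
  finally have "(cmod s)\<^sup>2 * (128 * C / lam ^ 3) \<le> cmod s / (8 * C)" .
  moreover have "cmod s / (4 * C) = 2 * (cmod s / (8 * C))" by simp
  moreover have "cmod s / (4 * C) - (cmod s)\<^sup>2 * (128 * C / lam ^ 3) \<le> cmod (laplace s - 1)"
    using s \<delta>(2) by (intro norm_laplace_sub_one_ge_near_zero) simp
  ultimately show ?thesis by linarith
qed

lemma norm_laplace_sub_one_ge_strip:
  assumes Re_s: "\<bar>Re s\<bar> \<le> gap_strip C lam" and s: "gap_radius C lam < cmod s"
  shows "(1 - cos (gap_angle C lam)) / 4 \<le> cmod (laplace s - 1)"
proof -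
  let ?\<delta> = "gap_radius C lam" and ?\<beta> = "gap_angle C lam"
  note \<delta> = gap_radius_bounds[OF C_pos lam_pos] and \<beta> = gap_angle_bounds[OF C_pos lam_pos]
  note \<gamma> = gap_strip_bounds[OF C_pos lam_pos]
  have "cmod s \<le> \<bar>Re s\<bar> + \<bar>Im s\<bar>" by (rule cmod_le)
  then have Im_s: "?\<delta> / 2 \<le> \<bar>Im s\<bar>" using s Re_s \<gamma>(2) by linarith
  have "2 / \<bar>Im s\<bar> \<le> 2 / (?\<delta> / 2)"
    using Im_s \<delta>(1) by (intro divide_left_mono) auto
  then have "C * ?\<beta> * (1 / (pi * lam) + 2 / \<bar>Im s\<bar>) \<le> C * ?\<beta> * (1 / (pi * lam) + 4 / ?\<delta>)"
    using \<beta>(1) C_pos by (intro mult_left_mono) auto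
  then have "(1 - cos ?\<beta>) * (1 / 2) \<le> (1 - cos ?\<beta>) * (1 - C * ?\<beta> * (1 / (pi * lam) + 2 / \<bar>Im s\<bar>))"
    using \<beta>(3,4) by (intro mult_left_mono) linarith+
  moreover have "\<bar>Re s\<bar> * (8 * C / lam\<^sup>2) \<le> (1 - cos ?\<beta>) / 4"
    using mult_right_mono[OF Re_s, of "8 * C / lam\<^sup>2"] \<gamma>(3) C_pos by simp
  moreover have "\<bar>Re s\<bar> \<le> lam / 4" using Re_s \<gamma>(2) \<delta>(2) by simp
  moreover have "Im s \<noteq> 0" using Im_s \<delta>(1) by auto
  ultimately show ?thesis
    using norm_laplace_sub_one_ge_oscillating[of s ?\<beta>] \<beta>(1,2) by linarith
qed

lemma norm_laplace_sub_one_ge_gap: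
  assumes "\<bar>Re s\<bar> \<le> gap_strip C lam"
  shows "gap_epsilon C lam * min (cmod s) 1 \<le> cmod (laplace s - 1)"
proof (cases "cmod s \<le> gap_radius C lam")
  case True
  have "gap_epsilon C lam * min (cmod s) 1 \<le> cmod s / (8 * C)"
    using mult_mono[OF gap_epsilon_bounds(2)[OF C_pos lam_pos] min.cobounded1[of "cmod s" 1]] C_pos
    by simp
  then show ?thesis using norm_laplace_sub_one_ge_small[OF True] by linarith
next
  case False
  have "gap_epsilon C lam * min (cmod s) 1 \<le> gap_epsilon C lam"
    using gap_epsilon_bounds(1)[OF C_pos lam_pos] by (simp add: mult_left_le)
  then show ?thesis
    using gap_epsilon_bounds(3)[OF C_pos lam_pos] norm_laplace_sub_one_ge_strip[OF assms] False
    by linarith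
qed

lemma laplace_neq_one:
  assumes "s \<noteq> 0" "Re s \<ge> - gap_strip C lam"
  shows "laplace s \<noteq> 1"
proof (cases "Re s \<le> gap_strip C lam")
  case True
  then have "gap_epsilon C lam * min (cmod s) 1 \<le> cmod (laplace s - 1)"
    using assms by (intro norm_laplace_sub_one_ge_gap) auto
  moreover have "0 < gap_epsilon C lam * min (cmod s) 1"
    using gap_epsilon_bounds(1)[OF C_pos lam_pos] assms by simp
  ultimately show ?thesis by auto
next
  case False
  then have "cmod (laplace s) < 1"
    using gap_strip_bounds(1)[OF C_pos lam_pos] by (intro norm_laplace_less_one) simp
  then show ?thesis by auto
qed

end

theorem lemma9:
  fixes C lam :: real
  assumes "C > 0" and "lam > 0"
  shows "\<exists>\<epsilon>>0. \<exists>\<gamma>>0. \<exists>I::real>0.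
    \<forall>(M::'a measure) (Y::'a \<Rightarrow> real) (f::real \<Rightarrow> real).
      prob_space M \<and> distributed M lborel Y (\<lambda>t. ennreal (f t)) \<and>
      (\<forall>t. 0 \<le> f t) \<and>
      (AE x in M. 0 \<le> Y x) \<and>
      (\<forall>t\<ge>0. f t \<le> C * exp (- lam * t))
      \<longrightarrow>
      (\<forall>s::complex. s \<noteq> 0 \<and> Re s \<ge> - \<gamma> \<longrightarrow>
          prob_space.expectation M (\<lambda>x. exp (- s * complex_of_real (Y x))) \<noteq> 1) \<and>
      (\<forall>s::complex. \<bar>Re s\<bar> \<le> \<gamma> \<longrightarrow>
          cmod (prob_space.expectation M (\<lambda>x. exp (- s * complex_of_real (Y x))) - 1)
            \<ge> \<epsilon> * min (cmod s) 1)"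
proof (rule exI[of _ "gap_epsilon C lam"], rule conjI[rotated], rule exI[of _ "gap_strip C lam"],
    rule conjI[rotated], rule exI[of _ "1::real"], intro conjI allI impI, goal_cases)
  case (2 M Y f s)
  then interpret exp_dominated_density M Y f C lam
    using assms by (simp add: exp_dominated_density_def exp_dominated_density_axioms_def)
  show ?case using 2 by (intro laplace_neq_one) auto
next
  case (3 M Y f s)
  then interpret exp_dominated_density M Y f C lam
    using assms by (simp add: exp_dominated_density_def exp_dominated_density_axioms_def)
  show ?case using 3 by (intro norm_laplace_sub_one_ge_gap) auto
qed (use gap_epsilon_bounds(1)[OF assms] gap_strip_bounds(1)[OF assms] in auto)

end
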